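(* Let $n\geq 1$ and $k\geq 2$ be integers, and let $w$ be a length-$n$ word over $\Sigma_k$. Then $\operatorname{rankU}_k(w)$ can be computed (from $w$ and $k$) in $O(kn^3)$ time using $O(n)$ space, under the unit-cost RAM model.
   Context: $\Sigma_k=\{1,2,\ldots,k\}$ with $1<2<\cdots<k$. Lexicographic order: for $x=x_1\cdots x_m$ and $y=y_1\cdots y_n$, $x<y$ if $x$ is a proper prefix of $y$, or if $x_i<y_i$ for the smallest $i$ with $x_i\neq y_i$. A border of a word $w$ is a word that is both a non-empty proper prefix and a non-empty proper suffix of $w$; $w$ is bordered if it has a border and unbordered otherwise. $\operatorname{rankU}_k(w)$ denotes the rank (position, starting from $1$) of $w$ in the lexicographic listing of all unbordered words of length $|w|$ over $\Sigma_k$; for an arbitrary word $w$ of length $n$ this is taken to mean $1$ plus the number of length-$n$ unbordered words over $\Sigma_k$ that are lexicographically smaller than $w$. Unit-cost RAM model: integer variables use constant space and integer arithmetic operations take constant time. *)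

theory Defs
  imports Main
begin

definition word_over :: "nat \<Rightarrow> nat list \<Rightarrow> bool" where
  "word_over k w \<longleftrightarrow> set w \<subseteq> {1..k}"

definition lex_less :: "nat list \<Rightarrow> nat list \<Rightarrow> bool" where
  "lex_less x y \<longleftrightarrow>
     (\<exists>v. v \<noteq> [] \<and> y = x @ v) \<or>
     (\<exists>i < min (length x) (length y). x ! i < y ! i \<and> (\<forall>j < i. x ! j = y ! j))"

definition is_border :: "nat list \<Rightarrow> nat list \<Rightarrow> bool" where
  "is_border u w \<longleftrightarrow> u \<noteq> [] \<and> length u < length w \<and>
     (\<exists>v. w = u @ v) \<and> (\<exists>v. w = v @ u)"

definition bordered :: "nat list \<Rightarrow> bool" where
  "bordered w \<longleftrightarrow> (\<exists>u. is_border u w)"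

definition unbordered :: "nat list \<Rightarrow> bool" where
  "unbordered w \<longleftrightarrow> \<not> bordered w"

definition rankU :: "nat \<Rightarrow> nat list \<Rightarrow> nat" where
  "rankU k w = 1 + card {u. length u = length w \<and> word_over k u \<and> unbordered u \<and> lex_less u w}"

text \<open>Every instruction costs one time unit; arithmetic on arbitrary integers is unit cost.\<close>

datatype instr =
    Const int int
  | Add int int int
  | Sub int int int
  | Mul int int int
  | Div int int int
  | Load int int
  | Store int int
  | Jz int nat
  | Jgtz int nat
  | Jmp nat

type_synonym config = "nat \<times> (int \<Rightarrow> int)"

definition halted :: "instr list \<Rightarrow> config \<Rightarrow> bool" where
  "halted P c \<longleftrightarrow> fst c \<ge> length P"

fun exec_instr :: "instr \<Rightarrow> config \<Rightarrow> config" where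
  "exec_instr (Const r v) (pc, m) = (Suc pc, m(r := v))"
| "exec_instr (Add r a b) (pc, m) = (Suc pc, m(r := m a + m b))"
| "exec_instr (Sub r a b) (pc, m) = (Suc pc, m(r := m a - m b))"
| "exec_instr (Mul r a b) (pc, m) = (Suc pc, m(r := m a * m b))"
| "exec_instr (Div r a b) (pc, m) = (Suc pc, m(r := m a div m b))"
| "exec_instr (Load r a) (pc, m) = (Suc pc, m(r := m (m a)))"
| "exec_instr (Store a b) (pc, m) = (Suc pc, m(m a := m b))"
| "exec_instr (Jz a l) (pc, m) = (if m a = 0 then l else Suc pc, m)"
| "exec_instr (Jgtz a l) (pc, m) = (if m a > 0 then l else Suc pc, m)"
| "exec_instr (Jmp l) (pc, m) = (l, m)"

fun cells_instr :: "instr \<Rightarrow> (int \<Rightarrow> int) \<Rightarrow> int set" where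
  "cells_instr (Const r v) m = {r}"
| "cells_instr (Add r a b) m = {r, a, b}"
| "cells_instr (Sub r a b) m = {r, a, b}"
| "cells_instr (Mul r a b) m = {r, a, b}"
| "cells_instr (Div r a b) m = {r, a, b}"
| "cells_instr (Load r a) m = {r, a, m a}"
| "cells_instr (Store a b) m = {a, b, m a}"
| "cells_instr (Jz a l) m = {a}"
| "cells_instr (Jgtz a l) m = {a}"
| "cells_instr (Jmp l) m = {}"

definition step :: "instr list \<Rightarrow> config \<Rightarrow> config" where
  "step P c = (if halted P c then c else exec_instr (P ! fst c) c)"

definition cells_step :: "instr list \<Rightarrow> config \<Rightarrow> int set" where
  "cells_step P c = (if halted P c then {} else cells_instr (P ! fst c) (snd c))"

definition steps :: "instr list \<Rightarrow> nat \<Rightarrow> config \<Rightarrow> config" where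
  "steps P t c = (step P ^^ t) c"

definition cells_used :: "instr list \<Rightarrow> nat \<Rightarrow> config \<Rightarrow> int set" where
  "cells_used P t c = (\<Union>i<t. cells_step P (steps P i c))"

text \<open>Input convention: M[0] = n, M[1] = k, M[2..n+1] = letters of w, all other cells 0;
  program counter 0.  Output convention: the result is in M[0] upon halting.\<close>
definition init_config :: "nat \<Rightarrow> nat list \<Rightarrow> config" where
  "init_config k w = (0, (\<lambda>a. if a = 0 then int (length w)
                              else if a = 1 then int k
                              else if 2 \<le> a \<and> a < int (length w) + 2 then int (w ! nat (a - 2))
                              else 0))"

end

theory Submission
  imports Defs
begin

text \<open>Let \<open>N(v)\<close> be the number of words of length \<open>|v|\<close> that are lexicographically smaller
  than \<open>v\<close> (the base-\<open>k\<close> value of \<open>v\<close> with digits shifted down by one) and \<open>R(v)\<close> the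
  number of unbordered ones, so that \<open>rankU\<^sub>k(v) = 1 + R(v)\<close>.  The shortest border of a
  bordered word is unbordered and at most half as long, and it is the only border with these
  two properties.  Sorting the bordered words below \<open>v = v\<^sub>1 v\<^sub>2 v\<^sub>3\<close> (with \<open>|v\<^sub>1| = |v\<^sub>3| = j\<close>)
  by the length \<open>j\<close> of that border, they are the words \<open>a x a\<close> with \<open>a\<close> unbordered of length
  \<open>j\<close>, and comparing piece by piece there are
  \<open>R(v\<^sub>1) k^(|v| - 2j) + [v\<^sub>1 unbordered] (N(v\<^sub>2) + [v\<^sub>1 < v\<^sub>3])\<close> of them.  So \<open>R(v)\<close> is \<open>N(v)\<close>
  minus a sum of \<open>|v|/2\<close> terms involving only shorter prefixes of \<open>v\<close>, and \<open>v\<close> is bordered iff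
  \<open>v\<^sub>1 = v\<^sub>3\<close> with \<open>v\<^sub>1\<close> unbordered for some \<open>j\<close>.  A RAM program fills a table with \<open>R\<close> and
  unborderedness of all prefixes of \<open>w\<close> in order of length; each pair (prefix, \<open>j\<close>) costs
  \<open>O(n)\<close> unit-cost steps, hence \<open>O(n\<^sup>3)\<close> steps and \<open>O(n)\<close> cells in total.\<close>

lemma word_over_Nil[simp]: "word_over k []"
  by (auto simp: word_over_def)

lemma word_over_Cons[simp]: "word_over k (c # x) \<longleftrightarrow> 1 \<le> c \<and> c \<le> k \<and> word_over k x"
  by (auto simp: word_over_def)

lemma word_over_append[simp]: "word_over k (x @ y) \<longleftrightarrow> word_over k x \<and> word_over k y"
  by (auto simp: word_over_def)

lemma word_over_take: "word_over k x \<Longrightarrow> word_over k (take i x)"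
  by (auto simp: word_over_def dest: in_set_takeD)

lemma word_over_drop: "word_over k x \<Longrightarrow> word_over k (drop i x)"
  by (auto simp: word_over_def dest: in_set_dropD)

lemma word_over_nth: "word_over k x \<Longrightarrow> i < length x \<Longrightarrow> 1 \<le> x ! i \<and> x ! i \<le> k"
  by (auto simp: word_over_def dest!: nth_mem)

definition words :: "nat \<Rightarrow> nat \<Rightarrow> nat list set" where
  "words k l = {x. length x = l \<and> word_over k x}"

lemma words_eq_lists: "words k l = {xs. set xs \<subseteq> {1..k} \<and> length xs = l}"
  by (auto simp: words_def word_over_def)

lemma finite_words[simp]: "finite (words k l)"
  unfolding words_eq_lists by (rule finite_lists_length_eq) simp

lemma card_words: "card (words k l) = k ^ l"
  unfolding words_eq_lists by (subst card_lists_length_eq) simp_all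

definition word_val :: "nat \<Rightarrow> nat list \<Rightarrow> nat" where
  "word_val k x = foldl (\<lambda>a c. a * k + (c - 1)) 0 x"

lemma word_val_Nil[simp]: "word_val k [] = 0"
  by (simp add: word_val_def)

lemma word_val_snoc: "word_val k (x @ [c]) = word_val k x * k + (c - 1)"
  by (simp add: word_val_def)

lemma word_val_append: "word_val k (x @ y) = word_val k x * k ^ length y + word_val k y"
proof (induction y rule: rev_induct)
  case Nil then show ?case by simp
next
  case (snoc c y)
  have "word_val k (x @ y @ [c]) = word_val k (x @ y) * k + (c - 1)"
    using word_val_snoc[of k "x @ y" c] by simp
  then show ?case using snoc by (simp add: word_val_snoc algebra_simps)
qed

lemma word_val_Cons: "word_val k (c # x) = (c - 1) * k ^ length x + word_val k x"
  using word_val_append[of k "[c]" x] by (simp add: word_val_def)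

lemma mult_add_less_mult_add:
  fixes K p q a b :: nat
  assumes "a < K" "b < K" "p < q"
  shows "p * K + a < q * K + b"
proof -
  have "p * K + a < p * K + K" using assms by simp
  also have "\<dots> = (p + 1) * K" by simp
  also have "\<dots> \<le> q * K" using assms by (intro mult_right_mono) auto
  finally show ?thesis by simp
qed

lemma word_val_less: "word_over k x \<Longrightarrow> word_val k x < k ^ length x"
proof (induction x)
  case Nil then show ?case by simp
next
  case (Cons c x)
  then have c: "1 \<le> c" "c \<le> k" and ih: "word_val k x < k ^ length x" by auto
  have "(c - 1) * k ^ length x + word_val k x < (c - 1) * k ^ length x + k ^ length x"
    using ih by simp
  also have "\<dots> = c * k ^ length x" using c by (cases c) auto
  also have "\<dots> \<le> k * k ^ length x" using c by (intro mult_right_mono) auto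
  finally show ?case by (simp add: word_val_Cons)
qed

lemma lex_less_irrefl[simp]: "\<not> lex_less x x"
  by (auto simp: lex_less_def)

lemma lex_less_same_length: "length x = length y \<Longrightarrow>
   lex_less x y \<longleftrightarrow> (\<exists>i<length x. x ! i < y ! i \<and> (\<forall>j<i. x ! j = y ! j))"
  by (auto simp: lex_less_def)

lemma lex_less_Cons: "length x = length y \<Longrightarrow>
   lex_less (a # x) (b # y) \<longleftrightarrow> a < b \<or> (a = b \<and> lex_less x y)"
  by (auto simp: lex_less_same_length Ex_less_Suc2 All_less_Suc2)

lemma lex_less_iff_word_val_less: "length x = length y \<Longrightarrow> word_over k x \<Longrightarrow> word_over k y \<Longrightarrow>
   lex_less x y \<longleftrightarrow> word_val k x < word_val k y"
proof (induction x y rule: list_induct2)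
  case Nil then show ?case by simp
next
  case (Cons a x b y)
  let ?K = "k ^ length x"
  have bx: "word_val k x < ?K" "word_val k y < ?K"
    using word_val_less[of k x] word_val_less[of k y] Cons.hyps Cons.prems by auto
  have ab: "1 \<le> a" "1 \<le> b" using Cons by auto
  have "lex_less (a # x) (b # y) \<longleftrightarrow> a < b \<or> (a = b \<and> word_val k x < word_val k y)"
    using Cons by (simp add: lex_less_Cons)
  also have "\<dots> \<longleftrightarrow> (a - 1) * ?K + word_val k x < (b - 1) * ?K + word_val k y"
  proof -
    have "a < b \<Longrightarrow> (a - 1) * ?K + word_val k x < (b - 1) * ?K + word_val k y"
      using ab bx by (intro mult_add_less_mult_add) auto
    moreover have "b < a \<Longrightarrow> (b - 1) * ?K + word_val k y < (a - 1) * ?K + word_val k x"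
      using ab bx by (intro mult_add_less_mult_add) auto
    ultimately show ?thesis by (cases a b rule: linorder_cases) auto
  qed
  finally show ?case using Cons by (simp add: word_val_Cons)
qed

lemma word_val_inj: "length x = length y \<Longrightarrow> word_over k x \<Longrightarrow> word_over k y \<Longrightarrow>
   word_val k x = word_val k y \<Longrightarrow> x = y"
proof (induction x y rule: list_induct2)
  case Nil then show ?case by simp
next
  case (Cons a x b y)
  let ?K = "k ^ length x"
  have bx: "word_val k x < ?K" "word_val k y < ?K"
    using word_val_less[of k x] word_val_less[of k y] Cons.hyps Cons.prems by auto
  have ab: "1 \<le> a" "1 \<le> b" using Cons by auto
  have eq: "(a - 1) * ?K + word_val k x = (b - 1) * ?K + word_val k y"
    using Cons by (simp add: word_val_Cons)
  have "a = b"
  proof (rule ccontr)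
    assume "a \<noteq> b"
    then have "a - 1 < b - 1 \<or> b - 1 < a - 1" using ab by linarith
    then show False
      using mult_add_less_mult_add[OF bx] mult_add_less_mult_add[OF bx(2,1)] eq by force
  qed
  then show ?case using eq Cons by simp
qed

lemma bij_betw_word_val: "bij_betw (word_val k) (words k l) {..<k ^ l}"
proof -
  have inj: "inj_on (word_val k) (words k l)"
    by (auto simp: inj_on_def words_def intro: word_val_inj)
  moreover have "word_val k ` words k l \<subseteq> {..<k ^ l}"
    by (auto simp: words_def word_val_less)
  moreover have "card (word_val k ` words k l) = card {..<k ^ l}"
    using inj by (simp add: card_image card_words)
  ultimately show ?thesis
    by (simp add: bij_betw_def card_subset_eq)
qed

lemma card_lex_less_eq_word_val:
  assumes "word_over k v"
  shows "card {x \<in> words k (length v). lex_less x v} = word_val k v"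
proof -
  let ?W = "words k (length v)"
  have bij: "bij_betw (word_val k) ?W {..<k ^ length v}"
    by (rule bij_betw_word_val)
  have "{x \<in> ?W. lex_less x v} = {x \<in> ?W. word_val k x < word_val k v}"
    using assms by (auto simp: words_def lex_less_iff_word_val_less)
  moreover have "word_val k ` {x \<in> ?W. word_val k x < word_val k v} = {..<word_val k v}"
    using bij word_val_less[OF assms] by (auto simp: bij_betw_def)
  moreover have "inj_on (word_val k) {x \<in> ?W. word_val k x < word_val k v}"
    using bij by (auto simp: bij_betw_def intro: inj_on_subset)
  ultimately show ?thesis
    by (metis card_image card_lessThan)
qed

lemma lex_less_append: "length u = length v \<Longrightarrow> length y = length z \<Longrightarrow>
  lex_less (u @ y) (v @ z) \<longleftrightarrow> lex_less u v \<or> (u = v \<and> lex_less y z)"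
  by (induction u v rule: list_induct2) (auto simp: lex_less_Cons)

lemma bordered_iff_take_eq_drop:
  "bordered w \<longleftrightarrow> (\<exists>j. 0 < j \<and> j < length w \<and> take j w = drop (length w - j) w)"
proof
  assume "bordered w"
  then obtain u where "is_border u w" by (auto simp: bordered_def)
  then obtain v1 v2 where u: "u \<noteq> []" "length u < length w" "w = u @ v1" "w = v2 @ u"
    unfolding is_border_def by blast
  have "take (length u) w = u" using u(3) by simp
  moreover have "drop (length w - length u) w = u" using u(4) by simp
  ultimately
  show "\<exists>j. 0 < j \<and> j < length w \<and> take j w = drop (length w - j) w"
    using u by (intro exI[of _ "length u"]) auto
next
  assume "\<exists>j. 0 < j \<and> j < length w \<and> take j w = drop (length w - j) w"
  then obtain j where j: "0 < j" "j < length w" "take j w = drop (length w - j) w" by blast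
  have "is_border (take j w) w"
    unfolding is_border_def
  proof (intro conjI)
    show "take j w \<noteq> []" using j by simp
    show "length (take j w) < length w" using j by simp
    show "\<exists>v. w = take j w @ v" by (metis append_take_drop_id)
    show "\<exists>v. w = v @ take j w" using j(3) by (metis append_take_drop_id)
  qed
  then show "bordered w" by (auto simp: bordered_def)
qed

lemma border_of_border:
  assumes "b \<le> j" "j \<le> length w" "take j w = drop (length w - j) w"
  shows "take b (take j w) = drop (j - b) (take j w) \<longleftrightarrow> take b w = drop (length w - b) w"
proof -
  have "drop (j - b) (take j w) = drop (j - b) (drop (length w - j) w)"
    using assms(3) by simp
  also have "\<dots> = drop (length w - b) w"
    using assms(1,2) by simp
  finally show ?thesis
    using assms(1) by (simp add: min_absorb1)
qed

lemma bordered_take_iff: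
  assumes "j \<le> length w" "take j w = drop (length w - j) w"
  shows "bordered (take j w) \<longleftrightarrow> (\<exists>b. 0 < b \<and> b < j \<and> take b w = drop (length w - b) w)"
  using assms border_of_border[OF less_imp_le assms]
  by (auto simp: bordered_iff_take_eq_drop min_absorb2)

text \<open>A border of length \<open>j > |w|/2\<close> gives \<open>w\<close> the period \<open>|w| - j < j\<close>, so the prefix of
  length \<open>2 j - |w|\<close> is a shorter border.\<close>

lemma overlapping_border:
  assumes "take j w = drop (length w - j) w" "j \<le> length w" "length w < 2 * j"
  shows "take (2 * j - length w) w = drop (length w - (2 * j - length w)) w"
proof (rule nth_equalityI)
  let ?L = "length w" and ?b = "2 * j - length w"
  have period: "w ! i = w ! (?L - j + i)" if "i < j" for i
    using that assms(1,2) by (metis length_take min.absorb2 nth_drop nth_take diff_le_self)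
  show "length (take ?b w) = length (drop (?L - ?b) w)"
    using assms by simp
  fix i assume "i < length (take ?b w)"
  then have i: "i < ?b" by simp
  have "?L - ?b + i = ?L - j + (j - ?b + i)"
    using assms(2,3) i by linarith
  then have "drop (?L - ?b) w ! i = w ! (?L - j + (j - ?b + i))"
    using assms i by simp
  also have "\<dots> = w ! (?L - j + i)"
    using period[of "j - ?b + i"] assms i by (simp add: algebra_simps)
  also have "\<dots> = w ! i"
    using period[of i] assms i by simp
  finally show "take ?b w ! i = drop (?L - ?b) w ! i"
    using i assms by simp
qed

definition unb_border :: "nat list \<Rightarrow> nat \<Rightarrow> bool" where
  "unb_border u j \<longleftrightarrow>
     0 < j \<and> 2 * j \<le> length u \<and> unbordered (take j u) \<and> take j u = drop (length u - j) u"

lemma bordered_iff_unb_border: "bordered w \<longleftrightarrow> (\<exists>j. unb_border w j)"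
proof
  let ?L = "length w"
  let ?P = "\<lambda>j. 0 < j \<and> j < ?L \<and> take j w = drop (?L - j) w"
  assume "bordered w"
  then have "\<exists>j. ?P j" by (simp add: bordered_iff_take_eq_drop)
  then obtain j where Pj: "?P j" and least: "\<And>i. i < j \<Longrightarrow> \<not> ?P i"
    using exists_least_iff[of ?P] by blast
  then have j: "j \<le> ?L" "take j w = drop (?L - j) w"
    by auto
  have "unbordered (take j w)"
    unfolding unbordered_def bordered_take_iff[OF j] using least Pj by force
  moreover have "2 * j \<le> ?L"
  proof (rule ccontr)
    assume "\<not> 2 * j \<le> ?L"
    moreover have "0 < 2 * j - ?L" "2 * j - ?L < ?L"
      using Pj \<open>\<not> 2 * j \<le> ?L\<close> by linarith+
    ultimately have "?P (2 * j - ?L)"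
      using Pj overlapping_border[of j w] by simp
    moreover have "2 * j - ?L < j"
      using Pj by linarith
    ultimately show False
      using least by blast
  qed
  ultimately show "\<exists>j. unb_border w j"
    using Pj by (auto simp: unb_border_def)
next
  assume "\<exists>j. unb_border w j"
  then show "bordered w"
    unfolding bordered_iff_take_eq_drop unb_border_def
    by (metis less_le_trans mult_2 less_add_same_cancel1)
qed

lemma unb_border_unique:
  assumes "unb_border w i" "unb_border w j"
  shows "i = j"
proof (rule ccontr)
  have shorter: "\<not> a < b" if "unb_border w a" "unb_border w b" for a b
  proof
    assume "a < b"
    have b_le: "b \<le> length w" and b_eq: "take b w = drop (length w - b) w"
      using that(2) by (auto simp: unb_border_def)
    have "bordered (take b w)"
      unfolding bordered_take_iff[OF b_le b_eq] using \<open>a < b\<close> that(1) by (auto simp: unb_border_def)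
    then show False
      using that(2) by (simp add: unb_border_def unbordered_def)
  qed
  assume "i \<noteq> j"
  then show False
    using shorter[OF assms] shorter[OF assms(2,1)] by linarith
qed

lemma card_unb_borders:
  "card {j \<in> {1..length w div 2}. unb_border w j} = (if unbordered w then 0 else 1)"
proof (cases "unbordered w")
  case True
  then show ?thesis
    by (auto simp: unbordered_def bordered_iff_unb_border)
next
  case False
  then obtain j where j: "unb_border w j"
    by (auto simp: unbordered_def bordered_iff_unb_border)
  then have "{j \<in> {1..length w div 2}. unb_border w j} = {j}"
    using unb_border_unique by (auto simp: unb_border_def)
  then show ?thesis
    using False by simp
qed

definition unb_words :: "nat \<Rightarrow> nat \<Rightarrow> nat list set" where
  "unb_words k l = {x \<in> words k l. unbordered x}"

lemma finite_unb_words[simp]: "finite (unb_words k l)"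
  by (simp add: unb_words_def)

definition unb_smaller :: "nat \<Rightarrow> nat list \<Rightarrow> nat" where
  "unb_smaller k v = card {u \<in> unb_words k (length v). lex_less u v}"

lemma rankU_eq_unb_smaller: "rankU k w = 1 + unb_smaller k w"
proof -
  have "{u. length u = length w \<and> word_over k u \<and> unbordered u \<and> lex_less u w} =
        {u \<in> unb_words k (length w). lex_less u w}"
    by (auto simp: unb_words_def words_def)
  then show ?thesis
    by (simp add: rankU_def unb_smaller_def)
qed

lemma take_middle_drop_decomp:
  "2 * j \<le> length u \<Longrightarrow> u = take j u @ take (length u - 2 * j) (drop j u) @ drop (length u - j) u"
proof -
  assume "2 * j \<le> length u"
  then have "drop (length u - j) u = drop (length u - 2 * j) (drop j u)"
    by simp
  then show ?thesis
    by (metis append_take_drop_id)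
qed

lemma unb_border_words:
  assumes "0 < j" "2 * j \<le> l"
  shows "{u \<in> words k l. unb_border u j} =
    (\<lambda>(a, x). a @ x @ a) ` (unb_words k j \<times> words k (l - 2 * j))"
proof
  show "(\<lambda>(a, x). a @ x @ a) ` (unb_words k j \<times> words k (l - 2 * j)) \<subseteq>
      {u \<in> words k l. unb_border u j}"
    using assms by (auto simp: unb_words_def words_def unb_border_def)
  show "{u \<in> words k l. unb_border u j} \<subseteq>
      (\<lambda>(a, x). a @ x @ a) ` (unb_words k j \<times> words k (l - 2 * j))"
  proof
    fix u assume u: "u \<in> {u \<in> words k l. unb_border u j}"
    then have "u = take j u @ take (l - 2 * j) (drop j u) @ take j u"
      using take_middle_drop_decomp[of j u] by (simp add: words_def unb_border_def)
    moreover have "(take j u, take (l - 2 * j) (drop j u)) \<in> unb_words k j \<times> words k (l - 2 * j)"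
      using u assms
      by (auto simp: unb_words_def words_def unb_border_def word_over_take word_over_drop)
    ultimately show "u \<in> (\<lambda>(a, x). a @ x @ a) ` (unb_words k j \<times> words k (l - 2 * j))"
      by (metis (no_types, lifting) case_prod_conv image_eqI)
  qed
qed

lemma inj_on_border_concat: "inj_on (\<lambda>(a, x). a @ x @ a) (words k j \<times> words k m)"
proof -
  have "a = b \<and> x = y" if "length a = length b" "a @ x @ a = b @ y @ b" for a x b y :: "nat list"
    using that by simp
  then show ?thesis
    by (auto simp: inj_on_def words_def)
qed

definition min_border_smaller :: "nat \<Rightarrow> nat list \<Rightarrow> nat \<Rightarrow> nat" where
  "min_border_smaller k v j = unb_smaller k (take j v) * k ^ (length v - 2 * j) +
     (if unbordered (take j v) then word_val k (take (length v - 2 * j) (drop j v)) +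
        (if lex_less (take j v) (drop (length v - j) v) then 1 else 0) else 0)"

text \<open>Comparing \<open>a x a < v\<^sub>1 v\<^sub>2 v\<^sub>3\<close> piece by piece: either \<open>a < v\<^sub>1\<close> (any \<open>x\<close>), or \<open>a = v\<^sub>1\<close> and
  \<open>x < v\<^sub>2\<close>, or \<open>a = v\<^sub>1\<close>, \<open>x = v\<^sub>2\<close> and \<open>v\<^sub>1 < v\<^sub>3\<close>.\<close>

lemma card_border_concat_less:
  assumes v: "v = v1 @ v2 @ v3" "length v1 = j" "length v2 = m" "length v3 = j"
    and w: "word_over k v"
  shows "card {(a, x) \<in> unb_words k j \<times> words k m. lex_less (a @ x @ a) v} =
    unb_smaller k v1 * k ^ m +
      (if unbordered v1 then word_val k v2 + (if lex_less v1 v3 then 1 else 0) else 0)"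
proof -
  define P1 where "P1 = {a \<in> unb_words k j. lex_less a v1} \<times> words k m"
  define P2 where "P2 = (if unbordered v1 then Pair v1 ` {x \<in> words k m. lex_less x v2} else {})"
  define P3 where "P3 = (if unbordered v1 \<and> lex_less v1 v3 then {(v1, v2)} else {})"
  have "{(a, x) \<in> unb_words k j \<times> words k m. lex_less (a @ x @ a) v} = P1 \<union> P2 \<union> P3"
    using v w by (auto simp: P1_def P2_def P3_def unb_words_def words_def lex_less_append)
  moreover have "finite P1" "finite P2" "finite P3" "P1 \<inter> P2 = {}" "(P1 \<union> P2) \<inter> P3 = {}"
    by (auto simp: P1_def P2_def P3_def)
  moreover have "card P1 = unb_smaller k v1 * k ^ m"
    using v by (simp add: P1_def unb_smaller_def card_cartesian_product card_words)
  moreover have "card P2 = (if unbordered v1 then word_val k v2 else 0)"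
    using card_lex_less_eq_word_val[of k v2] v w by (simp add: P2_def card_image inj_on_def)
  moreover have "card P3 = (if unbordered v1 \<and> lex_less v1 v3 then 1 else 0)"
    by (simp add: P3_def)
  ultimately show ?thesis
    by (simp add: card_Un_disjoint)
qed

lemma card_lex_less_unb_border:
  assumes v: "word_over k v" and j: "0 < j" "2 * j \<le> length v"
  shows "card {u \<in> words k (length v). lex_less u v \<and> unb_border u j} = min_border_smaller k v j"
proof -
  let ?m = "length v - 2 * j" and ?f = "\<lambda>(a, x). a @ x @ a"
  have "{u \<in> words k (length v). lex_less u v \<and> unb_border u j} =
      {u \<in> words k (length v). unb_border u j} \<inter> {u. lex_less u v}"
    by blast
  also have "\<dots> = ?f ` (unb_words k j \<times> words k ?m) \<inter> {u. lex_less u v}"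
    by (simp only: unb_border_words[OF j])
  also have "\<dots> = ?f ` {(a, x) \<in> unb_words k j \<times> words k ?m. lex_less (a @ x @ a) v}"
    by auto
  finally have "{u \<in> words k (length v). lex_less u v \<and> unb_border u j} =
      ?f ` {(a, x) \<in> unb_words k j \<times> words k ?m. lex_less (a @ x @ a) v}" .
  moreover have "inj_on ?f {(a, x) \<in> unb_words k j \<times> words k ?m. lex_less (a @ x @ a) v}"
    by (rule inj_on_subset[OF inj_on_border_concat]) (auto simp: unb_words_def)
  moreover have "card {(a, x) \<in> unb_words k j \<times> words k ?m. lex_less (a @ x @ a) v} =
      min_border_smaller k v j"
    unfolding min_border_smaller_def
    by (rule card_border_concat_less[OF take_middle_drop_decomp[OF j(2)]])
      (use j v in simp_all)
  ultimately show ?thesis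
    by (simp add: card_image)
qed

text \<open>Sorting the words below \<open>v\<close> by the length of their shortest border.\<close>

lemma word_val_decomp:
  assumes v: "word_over k v"
  shows "word_val k v = unb_smaller k v + (\<Sum>j\<in>{1..length v div 2}. min_border_smaller k v j)"
proof -
  let ?J = "{1..length v div 2}"
  let ?Less = "{u \<in> words k (length v). lex_less u v}"
  let ?U = "{u \<in> unb_words k (length v). lex_less u v}"
  define B where "B j = {u \<in> words k (length v). lex_less u v \<and> unb_border u j}" for j
  have split: "?Less = ?U \<union> (\<Union>j\<in>?J. B j)"
  proof (intro equalityI subsetI)
    fix u assume u: "u \<in> ?Less"
    show "u \<in> ?U \<union> (\<Union>j\<in>?J. B j)"
    proof (cases "unbordered u")
      case True
      then show ?thesis using u by (simp add: unb_words_def)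
    next
      case False
      then obtain j where j: "unb_border u j"
        by (auto simp: unbordered_def bordered_iff_unb_border)
      then have "j \<in> ?J"
        using u by (auto simp: unb_border_def words_def)
      then show ?thesis
        using u j by (auto simp: B_def)
    qed
  next
    fix u assume "u \<in> ?U \<union> (\<Union>j\<in>?J. B j)"
    then show "u \<in> ?Less"
      by (auto simp: unb_words_def B_def)
  qed
  have "?U \<inter> (\<Union>j\<in>?J. B j) = {}"
    unfolding B_def unb_words_def unbordered_def bordered_iff_unb_border by blast
  then have "card ?Less = card ?U + card (\<Union>j\<in>?J. B j)"
    unfolding split by (intro card_Un_disjoint) (auto simp: B_def)
  also have "card (\<Union>j\<in>?J. B j) = (\<Sum>j\<in>?J. card (B j))"
    by (rule card_UN_disjoint) (use unb_border_unique in \<open>auto simp: B_def\<close>)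
  also have "\<dots> = (\<Sum>j\<in>?J. min_border_smaller k v j)"
    by (rule sum.cong) (auto simp: B_def intro!: card_lex_less_unb_border[OF v])
  finally show ?thesis
    using card_lex_less_eq_word_val[OF v] by (simp add: unb_smaller_def)
qed

lemma steps_Suc: "steps P (Suc t) c = steps P t (step P c)"
  by (simp add: steps_def funpow_Suc_right del: funpow.simps)

lemma steps_0[simp]: "steps P 0 c = c"
  by (simp add: steps_def)

lemma steps_add: "steps P (a + b) c = steps P b (steps P a c)"
  by (simp add: steps_def add.commute[of a b] funpow_add)

lemma cells_used_0[simp]: "cells_used P 0 c = {}"
  by (simp add: cells_used_def)

lemma cells_used_Suc: "cells_used P (Suc t) c = cells_step P c \<union> cells_used P t (step P c)"
proof -
  have "cells_used P (Suc t) c = (\<Union>i\<in>insert 0 (Suc ` {..<t}). cells_step P (steps P i c))"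
    unfolding cells_used_def lessThan_Suc_eq_insert_0 ..
  also have "\<dots> = cells_step P c \<union> (\<Union>i<t. cells_step P (steps P (Suc i) c))" by simp
  also have "\<dots> = cells_step P c \<union> cells_used P t (step P c)"
    by (simp add: cells_used_def steps_Suc)
  finally show ?thesis .
qed

lemma cells_used_add: "cells_used P (a + b) c = cells_used P a c \<union> cells_used P b (steps P a c)"
proof (induction a arbitrary: c)
  case 0 then show ?case by simp
next
  case (Suc a)
  show ?case using Suc[of "step P c"] by (simp add: cells_used_Suc steps_Suc Un_assoc)
qed

definition reaches :: "instr list \<Rightarrow> int set \<Rightarrow> config \<Rightarrow> nat \<Rightarrow> (config \<Rightarrow> bool) \<Rightarrow> bool" where
  "reaches P S c B Q \<longleftrightarrow> (\<exists>t\<le>B. Q (steps P t c) \<and> cells_used P t c \<subseteq> S)"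

lemma reaches_here: "Q c \<Longrightarrow> reaches P S c B Q"
  unfolding reaches_def by (intro exI[of _ 0]) auto

lemma reaches_step:
  assumes "0 < B" "pc < length P" "cells_instr (P ! pc) m \<subseteq> S"
    "reaches P S (exec_instr (P ! pc) (pc, m)) (B - 1) Q"
  shows "reaches P S (pc, m) B Q"
proof -
  obtain t where t: "t \<le> B - 1" "Q (steps P t (exec_instr (P ! pc) (pc, m)))"
    "cells_used P t (exec_instr (P ! pc) (pc, m)) \<subseteq> S"
    using assms(4) unfolding reaches_def by blast
  have "step P (pc, m) = exec_instr (P ! pc) (pc, m)"
    and "cells_step P (pc, m) = cells_instr (P ! pc) m"
    using assms(2) by (simp_all add: step_def cells_step_def halted_def)
  then show ?thesis
    unfolding reaches_def using t assms(1,3)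
    by (intro exI[of _ "Suc t"]) (auto simp: steps_Suc cells_used_Suc)
qed

lemma reaches_seq:
  assumes "reaches P S c B1 Q1" "\<And>c'. Q1 c' \<Longrightarrow> reaches P S c' B2 Q2"
  shows "reaches P S c (B1 + B2) Q2"
proof -
  obtain t1 where t1: "t1 \<le> B1" "Q1 (steps P t1 c)" "cells_used P t1 c \<subseteq> S"
    using assms(1) unfolding reaches_def by blast
  obtain t2 where t2: "t2 \<le> B2" "Q2 (steps P t2 (steps P t1 c))"
    "cells_used P t2 (steps P t1 c) \<subseteq> S"
    using assms(2)[OF t1(2)] unfolding reaches_def by blast
  show ?thesis
    unfolding reaches_def using t1 t2
    by (intro exI[of _ "t1 + t2"]) (auto simp: steps_add cells_used_add)
qed

lemma reaches_mono:
  "reaches P S c B Q \<Longrightarrow> B \<le> B' \<Longrightarrow> (\<And>c. Q c \<Longrightarrow> Q' c) \<Longrightarrow> reaches P S c B' Q'"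
  unfolding reaches_def by (meson order_trans)

lemma reaches_loop:
  assumes "\<And>i c. I (Suc i) c \<Longrightarrow> reaches P S c b (I i)"
    and "\<And>c. I 0 c \<Longrightarrow> reaches P S c b0 Q"
  shows "I i c \<Longrightarrow> reaches P S c (i * b + b0) Q"
proof (induction i arbitrary: c)
  case 0
  then show ?case using assms(2) by simp
next
  case (Suc i)
  have "reaches P S c (b + (i * b + b0)) Q"
    by (rule reaches_seq[OF assms(1)[OF Suc.prems]]) (rule Suc.IH)
  then show ?case by (simp add: add.assoc)
qed

lemma reaches_for_loop:
  assumes step: "\<And>j c. j < b \<Longrightarrow> I j c \<Longrightarrow> reaches P S c s (I (Suc j))"
    and exit: "\<And>c. I b c \<Longrightarrow> reaches P S c s0 Q"
  shows "a \<le> b \<Longrightarrow> I a c \<Longrightarrow> reaches P S c ((b - a) * s + s0) Q"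
proof (induction "b - a" arbitrary: a c)
  case 0
  then show ?case using exit by simp
next
  case (Suc d)
  have "reaches P S c (s + ((b - Suc a) * s + s0)) Q"
    using Suc.prems Suc.hyps(2) by (intro reaches_seq[OF step] Suc.hyps(1)) auto
  moreover have "s + (b - Suc a) * s = (b - a) * s"
    using Suc.hyps(2) by (simp add: Suc_diff_Suc[symmetric] del: Suc_diff_Suc)
  ultimately show ?case by (metis add.assoc)
qed

text \<open>The program, in pseudo-code with the program counters of its loop heads.  It keeps
  the constants 1, 2, -100 in cells -1, -2, -18; the letter \<open>w ! i\<close> is in cell \<open>i + 2\<close>; the
  table entries \<open>R[j]\<close>, \<open>U[j]\<close> (rank among unbordered words and unborderedness of the
  prefix of length \<open>j\<close>) are the cells \<open>-100 - 2 j\<close>, \<open>-101 - 2 j\<close>; the variables below live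
  in the cells given on the right, and cells -12, -13, -16, -17 are scratch.
\<^verbatim>\<open>
   0  L := 1; V := 0                                       L: -3, V: -11
   5  while L <= n:
        V := V * k + w!(L-1) - 1
        S := 0; B := 0; j := 1                            S: -9, B: -10, j: -4
  15    while 2 * j <= L:
          R := R[j]; U := U[j]                            R: -15, U: -14
          a := 0; b := 0; i := 0                          a: -6, b: -7, i: -5
  26      while i < j:
            a := a * k + w!i - 1; b := b * k + w!(L-j+i) - 1; i := i + 1
          acc := R; i := j                                acc: -8
  47      while i + j < L:
            acc := acc * k + U * (w!i - 1); i := i + 1
          if a < b then acc := acc + U
          if a = b then B := B + U
          S := S + acc; j := j + 1
        R[L] := V - S; U[L] := 1 - B; L := L + 1
  78  M[0] := R[n] + 1
\<close>\<close>

definition rank_prog :: "instr list" where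
  "rank_prog = [
    Const (-1) 1,
    Const (-2) 2,
    Const (-18) (-100),
    Const (-3) 1,
    Const (-11) 0,
    Sub (-12) (-3) 0,
    Jgtz (-12) 78,
    Add (-13) (-3) (-1),
    Load (-16) (-13),
    Mul (-11) (-11) 1,
    Add (-11) (-11) (-16),
    Sub (-11) (-11) (-1),
    Const (-9) 0,
    Const (-10) 0,
    Const (-4) 1,
    Mul (-12) (-2) (-4),
    Sub (-12) (-12) (-3),
    Jgtz (-12) 69,
    Mul (-12) (-2) (-4),
    Sub (-13) (-18) (-12),
    Load (-15) (-13),
    Sub (-13) (-13) (-1),
    Load (-14) (-13),
    Const (-6) 0,
    Const (-7) 0,
    Const (-5) 0,
    Sub (-12) (-5) (-4),
    Add (-12) (-12) (-1),
    Jgtz (-12) 43,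
    Add (-13) (-5) (-2),
    Load (-16) (-13),
    Mul (-6) (-6) 1,
    Add (-6) (-6) (-16),
    Sub (-6) (-6) (-1),
    Sub (-13) (-3) (-4),
    Add (-13) (-13) (-5),
    Add (-13) (-13) (-2),
    Load (-16) (-13),
    Mul (-7) (-7) 1,
    Add (-7) (-7) (-16),
    Sub (-7) (-7) (-1),
    Add (-5) (-5) (-1),
    Jmp 26,
    Const (-8) 0,
    Add (-8) (-8) (-15),
    Const (-5) 0,
    Add (-5) (-5) (-4),
    Add (-12) (-5) (-4),
    Sub (-12) (-12) (-3),
    Add (-12) (-12) (-1),
    Jgtz (-12) 59,
    Add (-13) (-5) (-2),
    Load (-16) (-13),
    Sub (-16) (-16) (-1),
    Mul (-16) (-16) (-14),
    Mul (-8) (-8) 1,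
    Add (-8) (-8) (-16),
    Add (-5) (-5) (-1),
    Jmp 47,
    Sub (-12) (-7) (-6),
    Jgtz (-12) 62,
    Jmp 63,
    Add (-8) (-8) (-14),
    Jz (-12) 65,
    Jmp 66,
    Add (-10) (-10) (-14),
    Add (-9) (-9) (-8),
    Add (-4) (-4) (-1),
    Jmp 15,
    Mul (-12) (-2) (-3),
    Sub (-13) (-18) (-12),
    Sub (-17) (-11) (-9),
    Store (-13) (-17),
    Sub (-13) (-13) (-1),
    Sub (-17) (-1) (-10),
    Store (-13) (-17),
    Add (-3) (-3) (-1),
    Jmp 5,
    Mul (-12) (-2) 0,
    Sub (-13) (-18) (-12),
    Load 0 (-13),
    Add 0 0 (-1)]"

lemma length_rank_prog[simp]: "length rank_prog = 82"
  by (simp add: rank_prog_def)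

lemmas rank_prog_nth[simp] = arg_cong[where f = "\<lambda>P. P ! i" for i, OF rank_prog_def]

definition work_cells :: "nat \<Rightarrow> int set" where
  "work_cells n = {-(2 * int n + 200) .. int n + 1}"

locale rank_input =
  fixes k :: nat and w :: "nat list"
  assumes w_word: "word_over k w" and w_nonempty: "1 \<le> length w"
begin

abbreviation n :: nat where
  "n \<equiv> length w"

abbreviation runs :: "config \<Rightarrow> nat \<Rightarrow> (config \<Rightarrow> bool) \<Rightarrow> bool" where
  "runs \<equiv> reaches rank_prog (work_cells n)"

definition pref_rank :: "nat \<Rightarrow> int" where
  "pref_rank j = int (unb_smaller k (take j w))"

definition pref_unb :: "nat \<Rightarrow> int" where
  "pref_unb j = (if unbordered (take j w) then 1 else 0)"

definition ival :: "nat list \<Rightarrow> int" where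
  "ival x = int (word_val k x)"

definition input_mem :: "(int \<Rightarrow> int) \<Rightarrow> bool" where
  "input_mem m \<longleftrightarrow> m 0 = int n \<and> m 1 = int k \<and> m (-1) = 1 \<and> m (-2) = 2 \<and> m (-18) = -100 \<and>
     (\<forall>i<n. m (int i + 2) = int (w ! i))"

definition table_mem :: "(int \<Rightarrow> int) \<Rightarrow> nat \<Rightarrow> bool" where
  "table_mem m L \<longleftrightarrow> (\<forall>j. 1 \<le> j \<longrightarrow> j < L \<longrightarrow>
     m (-100 - 2 * int j) = pref_rank j \<and> m (-101 - 2 * int j) = pref_unb j)"

lemma ival_take_Suc: "word_over k x \<Longrightarrow> t < length x \<Longrightarrow>
   ival (take (Suc t) x) = ival (take t x) * int k + int (x ! t) - 1"
proof -
  assume a: "word_over k x" "t < length x"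
  have "1 \<le> x ! t" using word_over_nth[OF a] by simp
  then show ?thesis using a
    by (simp add: ival_def take_Suc_conv_app_nth word_val_snoc of_nat_diff)
qed

lemma ival_Nil[simp]: "ival [] = 0"
  by (simp add: ival_def)

text \<open>The \<open>j\<close>-th summands of the recurrences for the prefix of length \<open>L\<close>, comparing its prefix
  and suffix of length \<open>j\<close> by their values, as the program does.\<close>

definition rank_term :: "nat \<Rightarrow> nat \<Rightarrow> int" where
  "rank_term L j = pref_rank j * int k ^ (L - 2 * j) +
     pref_unb j * (ival (take (L - 2 * j) (drop j w)) +
       (if ival (take j w) < ival (take j (drop (L - j) w)) then 1 else 0))"

definition border_term :: "nat \<Rightarrow> nat \<Rightarrow> int" where
  "border_term L j =
     pref_unb j * (if ival (take j w) = ival (take j (drop (L - j) w)) then 1 else 0)"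

definition rank_sum :: "nat \<Rightarrow> nat \<Rightarrow> int" where
  "rank_sum L j = (\<Sum>i\<in>{1..<j}. rank_term L i)"

definition border_sum :: "nat \<Rightarrow> nat \<Rightarrow> int" where
  "border_sum L j = (\<Sum>i\<in>{1..<j}. border_term L i)"

lemma rank_sum_1[simp]: "rank_sum L 1 = 0"
  by (simp add: rank_sum_def)

lemma border_sum_1[simp]: "border_sum L 1 = 0"
  by (simp add: border_sum_def)

lemma rank_sum_Suc: "1 \<le> j \<Longrightarrow> rank_sum L (Suc j) = rank_sum L j + rank_term L j"
  by (simp add: rank_sum_def)

lemma border_sum_Suc: "1 \<le> j \<Longrightarrow> border_sum L (Suc j) = border_sum L j + border_term L j"
  by (simp add: border_sum_def)

lemma int_min_border_smaller:
  assumes "L \<le> n" "j \<in> {1..L div 2}"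
  shows "int (min_border_smaller k (take L w) j) = rank_term L j"
proof -
  have j: "2 * j \<le> L" "1 \<le> j" using assms(2) by auto
  have "take (L - 2 * j) (drop j (take L w)) = take (L - 2 * j) (drop j w)"
    using j by (simp add: drop_take take_take min_def)
  moreover have "drop (L - j) (take L w) = take j (drop (L - j) w)"
    using j assms(1) by (simp add: drop_take)
  moreover have "lex_less (take j w) (take j (drop (L - j) w)) \<longleftrightarrow>
      word_val k (take j w) < word_val k (take j (drop (L - j) w))"
    using j assms(1)
    by (intro lex_less_iff_word_val_less) (auto intro: word_over_take word_over_drop w_word)
  ultimately show ?thesis
    using j assms(1)
    by (simp add: min_border_smaller_def rank_term_def pref_rank_def pref_unb_def ival_def)
qed

lemma border_term_eq:
  assumes "L \<le> n" "j \<in> {1..L div 2}"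
  shows "border_term L j = of_bool (unb_border (take L w) j)"
proof -
  have j: "2 * j \<le> L" "1 \<le> j" using assms(2) by auto
  have "drop (L - j) (take L w) = take j (drop (L - j) w)"
    using j assms(1) by (simp add: drop_take)
  moreover have "take j w = take j (drop (L - j) w) \<longleftrightarrow>
      word_val k (take j w) = word_val k (take j (drop (L - j) w))"
    using j assms(1) word_val_inj[of "take j w" "take j (drop (L - j) w)" k]
    by (auto intro: word_over_take word_over_drop w_word)
  ultimately show ?thesis
    using j assms(1) by (simp add: border_term_def unb_border_def pref_unb_def ival_def)
qed

lemma pref_rank_recurrence:
  assumes "L \<le> n"
  shows "pref_rank L = ival (take L w) - rank_sum L (L div 2 + 1)"
proof -
  have "{1..<L div 2 + 1} = {1..L div 2}" by auto
  then have "rank_sum L (L div 2 + 1) = (\<Sum>j\<in>{1..L div 2}. int (min_border_smaller k (take L w) j))"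
    using int_min_border_smaller[OF assms] by (simp add: rank_sum_def)
  also have "\<dots> = ival (take L w) - pref_rank L"
    using word_val_decomp[OF word_over_take[OF w_word], of L] assms
    by (simp add: ival_def pref_rank_def)
  finally show ?thesis by simp
qed

lemma pref_unb_recurrence:
  assumes "L \<le> n"
  shows "pref_unb L = 1 - border_sum L (L div 2 + 1)"
proof -
  have "{1..<L div 2 + 1} = {1..L div 2}" by auto
  then have "border_sum L (L div 2 + 1) = (\<Sum>j\<in>{1..L div 2}. of_bool (unb_border (take L w) j))"
    using border_term_eq[OF assms] by (simp add: border_sum_def)
  also have "\<dots> = int (card {j \<in> {1..length (take L w) div 2}. unb_border (take L w) j})"
    using assms by (simp add: Int_def)
  also have "\<dots> = 1 - pref_unb L"
    unfolding card_unb_borders by (simp add: pref_unb_def)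
  finally show ?thesis by simp
qed

lemma input_mem_upd[simp]: "r \<in> {-17..-3} \<Longrightarrow> input_mem (m(r := v)) = input_mem m"
  unfolding input_mem_def by auto

lemma input_mem_upd_table[simp]: "a < -20 \<Longrightarrow> input_mem (m(a := v)) = input_mem m"
  unfolding input_mem_def by auto

lemma table_cells_distinct[simp]:
  "-100 - 2 * int a \<noteq> -101 - 2 * int b" "-101 - 2 * int a \<noteq> -100 - 2 * int b"
  by presburger+

lemma table_mem_upd[simp]: "r \<in> {-30..-1} \<Longrightarrow> table_mem (m(r := v)) L = table_mem m L"
  unfolding table_mem_def by auto

definition prefix_frame :: "(int \<Rightarrow> int) \<Rightarrow> nat \<Rightarrow> bool" where
  "prefix_frame m L \<longleftrightarrow> input_mem m \<and> table_mem m L \<and> m (-3) = int L \<and>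
     m (-11) = ival (take L w) \<and> 1 \<le> L \<and> L \<le> n"

definition border_frame :: "(int \<Rightarrow> int) \<Rightarrow> nat \<Rightarrow> nat \<Rightarrow> bool" where
  "border_frame m L j \<longleftrightarrow> prefix_frame m L \<and> m (-4) = int j \<and>
     m (-9) = rank_sum L j \<and> m (-10) = border_sum L j \<and>
     m (-15) = pref_rank j \<and> m (-14) = pref_unb j \<and> 1 \<le> j \<and> 2 * j \<le> L"

lemma prefix_frame_upd[simp]:
  "r \<in> {-4,-5,-6,-7,-8,-9,-10,-12,-13,-14,-15,-16,-17} \<Longrightarrow>
    prefix_frame (m(r := v)) L = prefix_frame m L"
  unfolding prefix_frame_def by auto

lemma border_frame_upd[simp]:
  "r \<in> {-5,-6,-7,-8,-12,-13,-16,-17} \<Longrightarrow> border_frame (m(r := v)) L j = border_frame m L j"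
  unfolding border_frame_def by auto

lemma input_memD:
  "input_mem m \<Longrightarrow> m 0 = int n \<and> m 1 = int k \<and> m (-1) = 1 \<and> m (-2) = 2 \<and> m (-18) = -100"
  by (simp add: input_mem_def)

lemma input_mem_letter: "input_mem m \<Longrightarrow> i < n \<Longrightarrow> a = int i + 2 \<Longrightarrow> m a = int (w ! i)"
  by (simp add: input_mem_def)

lemma prefix_frameD:
  "prefix_frame m L \<Longrightarrow>
    input_mem m \<and> table_mem m L \<and> m (-3) = int L \<and> m (-11) = ival (take L w) \<and> 1 \<le> L \<and> L \<le> n"
  by (simp add: prefix_frame_def)

lemma border_frameD:
  "border_frame m L j \<Longrightarrow> prefix_frame m L \<and> m (-4) = int j \<and>
     m (-9) = rank_sum L j \<and> m (-10) = border_sum L j \<and>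
     m (-15) = pref_rank j \<and> m (-14) = pref_unb j \<and> 1 \<le> j \<and> 2 * j \<le> L"
  by (simp add: border_frame_def)

text \<open>The invariants below describe the configuration at the loop heads of the pseudo-code
  (program counters 5, 15, 26, 47) and at some intermediate points; the index \<open>i\<close> of
  \<open>compare_inv\<close> and \<open>middle_inv\<close> counts the remaining iterations.\<close>

definition compare_inv :: "nat \<Rightarrow> nat \<Rightarrow> nat \<Rightarrow> config \<Rightarrow> bool" where
  "compare_inv L j i c \<longleftrightarrow> i \<le> j \<and> fst c = 26 \<and> border_frame (snd c) L j \<and> snd c (-5) = int (j - i) \<and>
     snd c (-6) = ival (take (j - i) w) \<and> snd c (-7) = ival (take (j - i) (drop (L - j) w))"

lemma compare_step:
  assumes "compare_inv L j (Suc i) c"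
  shows "runs c 17 (compare_inv L j i)"
proof -
  obtain m where c: "c = (26, m)" using assms by (cases c) (auto simp: compare_inv_def)
  define t where "t = j - Suc i"
  have fr: "border_frame m L j" and iv: "Suc i \<le> j" "m (-5) = int t" "m (-6) = ival (take t w)"
     "m (-7) = ival (take t (drop (L - j) w))"
    using assms by (auto simp: compare_inv_def c t_def)
  have jt: "j - i = Suc t" using iv t_def by simp
  have fl: "prefix_frame m L" and fj: "m (-4) = int j" "1 \<le> j" "2 * j \<le> L"
    using border_frameD[OF fr] by auto
  have bs: "input_mem m" and fL: "m (-3) = int L" "1 \<le> L" "L \<le> n" using prefix_frameD[OF fl] by auto
  have bd: "m 0 = int n" "m 1 = int k" "m (-1) = 1" "m (-2) = 2" "m (-18) = -100"
    using input_memD[OF bs] by auto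
  have tj: "t < j" using iv t_def by simp
  have x1: "m (int t + 2) = int (w ! t)" using input_mem_letter[OF bs, of t] tj fj fL by simp
  have x2: "m (int L - int j + int t + 2) = int (w ! (L - j + t))"
    by (rule input_mem_letter[OF bs]) (use tj fj fL in simp)+
  have val_a: "ival (take (Suc t) w) = ival (take t w) * int k + int (w ! t) - 1"
    using ival_take_Suc[OF w_word, of t] tj fj fL by simp
  have val_b: "ival (take (Suc t) (drop (L - j) w)) =
      ival (take t (drop (L - j) w)) * int k + int (w ! (L - j + t)) - 1"
    using ival_take_Suc[OF word_over_drop[OF w_word], of t "L - j"] tj fj fL by simp
  show ?thesis
    unfolding c using fj fL bd iv tj x1 x2
    by - ((rule reaches_step, simp, simp, simp add: work_cells_def, simp)+, rule reaches_here,
        use fr iv jt val_a val_b in \<open>simp add: compare_inv_def\<close>)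
qed


definition compare_done :: "nat \<Rightarrow> nat \<Rightarrow> config \<Rightarrow> bool" where
  "compare_done L j c \<longleftrightarrow> fst c = 43 \<and> border_frame (snd c) L j \<and>
     snd c (-6) = ival (take j w) \<and> snd c (-7) = ival (take j (drop (L - j) w))"

lemma compare_exit:
  assumes "compare_inv L j 0 c"
  shows "runs c 3 (compare_done L j)"
proof -
  obtain m where c: "c = (26, m)" using assms by (cases c) (auto simp: compare_inv_def)
  have fr: "border_frame m L j" and iv: "m (-5) = int j" "m (-6) = ival (take j w)"
     "m (-7) = ival (take j (drop (L - j) w))"
    using assms by (auto simp: compare_inv_def c)
  have fl: "prefix_frame m L" and fj: "m (-4) = int j" "1 \<le> j" "2 * j \<le> L"
    using border_frameD[OF fr] by auto
  have bs: "input_mem m" using prefix_frameD[OF fl] by auto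
  have bd: "m (-1) = 1" using input_memD[OF bs] by auto
  show ?thesis
    unfolding c using fj bd iv
    by - ((rule reaches_step, simp, simp, simp add: work_cells_def, simp)+, rule reaches_here,
        use fr iv in \<open>simp add: compare_done_def\<close>)
qed

lemma compare_loop:
  assumes "compare_inv L j j c"
  shows "runs c (j * 17 + 3) (compare_done L j)"
  by (rule reaches_loop[of "compare_inv L j"]) (use compare_step compare_exit assms in auto)

definition middle_inv :: "nat \<Rightarrow> nat \<Rightarrow> nat \<Rightarrow> config \<Rightarrow> bool" where
  "middle_inv L j i c \<longleftrightarrow> i \<le> L - 2 * j \<and> fst c = 47 \<and> border_frame (snd c) L j \<and>
     snd c (-6) = ival (take j w) \<and> snd c (-7) = ival (take j (drop (L - j) w)) \<and>
     snd c (-5) = int (L - j - i) \<and>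
     snd c (-8) = pref_rank j * int k ^ (L - 2 * j - i) +
       pref_unb j * ival (take (L - 2 * j - i) (drop j w))"

definition middle_done :: "nat \<Rightarrow> nat \<Rightarrow> config \<Rightarrow> bool" where
  "middle_done L j c \<longleftrightarrow> fst c = 59 \<and> border_frame (snd c) L j \<and>
     snd c (-6) = ival (take j w) \<and> snd c (-7) = ival (take j (drop (L - j) w)) \<and>
     snd c (-8) = pref_rank j * int k ^ (L - 2 * j) + pref_unb j * ival (take (L - 2 * j) (drop j w))"

lemma middle_step:
  assumes "middle_inv L j (Suc i) c"
  shows "runs c 12 (middle_inv L j i)"
proof -
  obtain m where c: "c = (47, m)" using assms by (cases c) (auto simp: middle_inv_def)
  define e where "e = L - 2 * j - Suc i"
  have fr: "border_frame m L j" and iv: "Suc i \<le> L - 2 * j" "m (-5) = int (j + e)"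
     "m (-8) = pref_rank j * int k ^ e + pref_unb j * ival (take e (drop j w))"
     "m (-6) = ival (take j w)" "m (-7) = ival (take j (drop (L - j) w))"
    using assms by (auto simp: middle_inv_def c e_def)
  have fl: "prefix_frame m L" and fj: "m (-4) = int j" "1 \<le> j" "2 * j \<le> L" "m (-14) = pref_unb j"
    using border_frameD[OF fr] by auto
  have bs: "input_mem m" and fL: "m (-3) = int L" "1 \<le> L" "L \<le> n" using prefix_frameD[OF fl] by auto
  have bd: "m 0 = int n" "m 1 = int k" "m (-1) = 1" "m (-2) = 2" "m (-18) = -100"
    using input_memD[OF bs] by auto
  have et: "j + e < L - j" using iv e_def by simp
  have et2: "2 * int j + int e < int L" using et by linarith
  have x1: "m (int j + int e + 2) = int (w ! (j + e))"
    by (rule input_mem_letter[OF bs]) (use et fj fL in simp)+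
  have val_mid: "ival (take (Suc e) (drop j w)) =
      ival (take e (drop j w)) * int k + int (w ! (j + e)) - 1"
    using ival_take_Suc[OF word_over_drop[OF w_word], of e j] et fj fL by simp
  have ie: "L - 2 * j - i = Suc e" "L - j - i = Suc (j + e)" using iv e_def by auto
  show ?thesis
    unfolding c using fj fL bd iv et x1 et2
    by - ((rule reaches_step, simp, simp, simp add: work_cells_def, simp)+, rule reaches_here,
        use fr iv ie in \<open>simp add: middle_inv_def val_mid algebra_simps\<close>)
qed

lemma middle_exit:
  assumes "middle_inv L j 0 c"
  shows "runs c 4 (middle_done L j)"
proof -
  obtain m where c: "c = (47, m)" using assms by (cases c) (auto simp: middle_inv_def)
  have fr: "border_frame m L j" and iv: "m (-5) = int (L - j)"
    using assms by (auto simp: middle_inv_def c)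
  have fl: "prefix_frame m L" and fj: "m (-4) = int j" "1 \<le> j" "2 * j \<le> L"
    using border_frameD[OF fr] by auto
  have bs: "input_mem m" and fL: "m (-3) = int L" using prefix_frameD[OF fl] by auto
  have bd: "m (-1) = 1" using input_memD[OF bs] by auto
  show ?thesis
    unfolding c using fj bd iv fL
    by - ((rule reaches_step, simp, simp, simp add: work_cells_def, simp)+, rule reaches_here,
        use assms in \<open>simp add: middle_done_def middle_inv_def c\<close>)
qed

lemma middle_loop:
  assumes "middle_inv L j (L - 2 * j) c"
  shows "runs c ((L - 2 * j) * 12 + 4) (middle_done L j)"
  by (rule reaches_loop[of "middle_inv L j"]) (use middle_step middle_exit assms in auto)

definition border_inv :: "nat \<Rightarrow> nat \<Rightarrow> config \<Rightarrow> bool" where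
  "border_inv L j c \<longleftrightarrow> fst c = 15 \<and> prefix_frame (snd c) L \<and> snd c (-4) = int j \<and>
     snd c (-9) = rank_sum L j \<and> snd c (-10) = border_sum L j \<and> 1 \<le> j \<and> j \<le> L div 2 + 1"

lemma border_head:
  assumes "border_inv L j c" "2 * j \<le> L"
  shows "runs c 11 (compare_inv L j j)"
proof -
  obtain m where c: "c = (15, m)" using assms by (cases c) (auto simp: border_inv_def)
  have fl: "prefix_frame m L"
    and iv: "m (-4) = int j" "m (-9) = rank_sum L j" "m (-10) = border_sum L j" "1 \<le> j"
    using assms by (auto simp: border_inv_def c)
  have bs: "input_mem m" and tb: "table_mem m L"
    and fL: "m (-3) = int L" "1 \<le> L" "L \<le> n" "m (-11) = ival (take L w)"
    using prefix_frameD[OF fl] by auto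
  have bd: "m 0 = int n" "m 1 = int k" "m (-1) = 1" "m (-2) = 2" "m (-18) = -100"
    using input_memD[OF bs] by auto
  have tj: "m (-100 - 2 * int j) = pref_rank j" "m (-101 - 2 * int j) = pref_unb j"
    using tb iv assms(2) unfolding table_mem_def by auto
  show ?thesis
    unfolding c using fL bd iv tj assms(2)
    by - ((rule reaches_step, simp, simp, simp add: work_cells_def, simp)+, rule reaches_here,
        use fl iv assms(2) in \<open>simp add: compare_inv_def border_frame_def\<close>)
qed

lemma compare_to_middle:
  assumes "compare_done L j c"
  shows "runs c 4 (middle_inv L j (L - 2 * j))"
proof -
  obtain m where c: "c = (43, m)" using assms by (cases c) (auto simp: compare_done_def)
  have fr: "border_frame m L j" using assms by (auto simp: compare_done_def c)
  have fj: "m (-4) = int j" "1 \<le> j" "2 * j \<le> L" "m (-15) = pref_rank j"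
    using border_frameD[OF fr] by auto
  show ?thesis
    unfolding c using fj
    by - ((rule reaches_step, simp, simp, simp add: work_cells_def, simp)+, rule reaches_here,
        use assms fj in \<open>simp add: middle_inv_def compare_done_def c\<close>)
qed

lemma border_tail:
  assumes "middle_done L j c"
  shows "runs c 8 (border_inv L (Suc j))"
proof -
  obtain m where c: "c = (59, m)" using assms by (cases c) (auto simp: middle_done_def)
  have fr: "border_frame m L j"
    and iv: "m (-6) = ival (take j w)" "m (-7) = ival (take j (drop (L - j) w))"
     "m (-8) = pref_rank j * int k ^ (L - 2 * j) + pref_unb j * ival (take (L - 2 * j) (drop j w))"
    using assms by (auto simp: middle_done_def c)
  have fl: "prefix_frame m L" and fj: "m (-4) = int j" "1 \<le> j" "2 * j \<le> L" "m (-14) = pref_unb j"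
     "m (-9) = rank_sum L j" "m (-10) = border_sum L j"
    using border_frameD[OF fr] by auto
  have bs: "input_mem m" using prefix_frameD[OF fl] by auto
  have bd: "m (-1) = 1" using input_memD[OF bs] by auto
  have jl: "Suc j \<le> L div 2 + 1" using fj by auto
  consider (lt) "ival (take j w) < ival (take j (drop (L - j) w))"
    | (eq) "ival (take j w) = ival (take j (drop (L - j) w))"
    | (gt) "ival (take j (drop (L - j) w)) < ival (take j w)" by fastforce
  then show ?thesis
  proof cases
    case lt
    then show ?thesis
      unfolding c using fj bd iv
      by - ((rule reaches_step, simp, simp, simp add: work_cells_def, simp)+, rule reaches_here,
          use fl fj lt jl in \<open>simp add: border_inv_def rank_sum_Suc border_sum_Suc rank_term_def
            border_term_def algebra_simps\<close>)
  next
    case eq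
    then show ?thesis
      unfolding c using fj bd iv
      by - ((rule reaches_step, simp, simp, simp add: work_cells_def, simp)+, rule reaches_here,
          use fl fj eq jl in \<open>simp add: border_inv_def rank_sum_Suc border_sum_Suc rank_term_def
            border_term_def\<close>)
  next
    case gt
    then show ?thesis
      unfolding c using fj bd iv
      by - ((rule reaches_step, simp, simp, simp add: work_cells_def, simp)+, rule reaches_here,
          use fl fj gt jl in \<open>simp add: border_inv_def rank_sum_Suc border_sum_Suc rank_term_def
            border_term_def\<close>)
  qed
qed

lemma border_iter:
  assumes "border_inv L j c" "2 * j \<le> L"
  shows "runs c (17 * n + 30) (border_inv L (Suc j))"
proof -
  have fL: "L \<le> n" using assms(1) by (cases c) (auto simp: border_inv_def prefix_frame_def)
  have "runs c (11 + ((j * 17 + 3) + (4 + (((L - 2 * j) * 12 + 4) + 8)))) (border_inv L (Suc j))"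
    apply (rule reaches_seq[OF border_head[OF assms]])
    apply (rule reaches_seq[OF compare_loop], assumption)
    apply (rule reaches_seq[OF compare_to_middle], assumption)
    apply (rule reaches_seq[OF middle_loop], assumption)
    apply (rule border_tail, assumption)
    done
  moreover have "11 + ((j * 17 + 3) + (4 + (((L - 2 * j) * 12 + 4) + 8))) \<le> 17 * n + 30"
    using assms(2) fL by (simp add: diff_mult_distrib)
  ultimately show ?thesis by (rule reaches_mono) auto
qed

definition prefix_inv :: "nat \<Rightarrow> config \<Rightarrow> bool" where
  "prefix_inv L c \<longleftrightarrow> fst c = 5 \<and> input_mem (snd c) \<and> table_mem (snd c) L \<and> snd c (-3) = int L \<and>
     snd c (-11) = ival (take (L - 1) w) \<and> 1 \<le> L \<and> L \<le> n + 1"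

lemma border_exit:
  assumes "border_inv L (L div 2 + 1) c"
  shows "runs c 12 (prefix_inv (Suc L))"
proof -
  obtain m where c: "c = (15, m)" using assms by (cases c) (auto simp: border_inv_def)
  let ?j = "L div 2 + 1"
  have fl: "prefix_frame m L"
    and iv: "m (-4) = int ?j" "m (-9) = rank_sum L ?j" "m (-10) = border_sum L ?j"
    using assms by (auto simp: border_inv_def c)
  have bs: "input_mem m" and tb: "table_mem m L"
    and fL: "m (-3) = int L" "1 \<le> L" "L \<le> n" "m (-11) = ival (take L w)"
    using prefix_frameD[OF fl] by auto
  have bd: "m 0 = int n" "m 1 = int k" "m (-1) = 1" "m (-2) = 2" "m (-18) = -100"
    using input_memD[OF bs] by auto
  have ml: "pref_rank L = ival (take L w) - rank_sum L ?j" "pref_unb L = 1 - border_sum L ?j"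
    using pref_rank_recurrence pref_unb_recurrence fL by auto
  have lt: "L < 2 * (L div 2 + 1)" by simp
  show ?thesis
    unfolding c using fL bd iv lt
    by - ((rule reaches_step, simp, simp, simp add: work_cells_def, simp)+, rule reaches_here,
        use bs tb fL ml in \<open>auto simp: prefix_inv_def table_mem_def less_Suc_eq\<close>)
qed

lemma border_loop:
  assumes "border_inv L 1 c"
  shows "runs c ((L div 2) * (17 * n + 30) + 12) (prefix_inv (Suc L))"
proof -
  have "2 * j \<le> L" if "j < L div 2 + 1" for j
    using that by presburger
  then have "runs c ((L div 2 + 1 - 1) * (17 * n + 30) + 12) (prefix_inv (Suc L))"
    by (intro reaches_for_loop[of "L div 2 + 1" "border_inv L"] border_iter border_exit assms) auto
  then show ?thesis by simp
qed

lemma prefix_head: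
  assumes "prefix_inv L c" "L \<le> n"
  shows "runs c 10 (border_inv L 1)"
proof -
  obtain m where c: "c = (5, m)" using assms by (cases c) (auto simp: prefix_inv_def)
  have bs: "input_mem m" and tb: "table_mem m L"
    and iv: "m (-3) = int L" "m (-11) = ival (take (L - 1) w)" "1 \<le> L"
    using assms by (auto simp: prefix_inv_def c)
  have bd: "m 0 = int n" "m 1 = int k" "m (-1) = 1" "m (-2) = 2" "m (-18) = -100"
    using input_memD[OF bs] by auto
  have x: "m (int L + 1) = int (w ! (L - 1))"
    by (rule input_mem_letter[OF bs]) (use iv assms(2) in simp)+
  have val_pref: "ival (take L w) = ival (take (L - 1) w) * int k + int (w ! (L - 1)) - 1"
    using ival_take_Suc[OF w_word, of "L - 1"] iv assms(2) by simp
  have ln: "int L \<le> int n" using assms(2) by simp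
  show ?thesis
    unfolding c using bd iv x ln
    by - ((rule reaches_step, simp, simp, simp add: work_cells_def, simp)+, rule reaches_here,
        use bs tb iv assms(2) in
          \<open>simp add: border_inv_def prefix_frame_def val_pref rank_sum_def border_sum_def\<close>)
qed

lemma prefix_iter:
  assumes "prefix_inv L c" "L \<le> n"
  shows "runs c (n * (17 * n + 30) + 22) (prefix_inv (Suc L))"
proof -
  have "runs c (10 + ((L div 2) * (17 * n + 30) + 12)) (prefix_inv (Suc L))"
    by (rule reaches_seq[OF prefix_head[OF assms]]) (rule border_loop)
  moreover have "10 + ((L div 2) * (17 * n + 30) + 12) \<le> n * (17 * n + 30) + 22"
  proof -
    have "L div 2 \<le> n" using assms(2) by simp
    then have "(L div 2) * (17 * n + 30) \<le> n * (17 * n + 30)" by (rule mult_right_mono) simp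
    then show ?thesis by simp
  qed
  ultimately show ?thesis by (rule reaches_mono) auto
qed

definition final :: "config \<Rightarrow> bool" where
  "final c \<longleftrightarrow> halted rank_prog c \<and> snd c 0 = int (rankU k w)"

lemma prefix_exit:
  assumes "prefix_inv (Suc n) c"
  shows "runs c 6 final"
proof -
  obtain m where c: "c = (5, m)" using assms by (cases c) (auto simp: prefix_inv_def)
  have bs: "input_mem m" and tb: "table_mem m (Suc n)" and iv: "m (-3) = int (Suc n)"
    using assms by (auto simp: prefix_inv_def c)
  have bd: "m 0 = int n" "m 1 = int k" "m (-1) = 1" "m (-2) = 2" "m (-18) = -100"
    using input_memD[OF bs] by auto
  have tn: "m (-100 - 2 * int n) = pref_rank n" using tb w_nonempty unfolding table_mem_def by auto
  have rr: "pref_rank n + 1 = int (rankU k w)" by (simp add: pref_rank_def rankU_eq_unb_smaller)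
  show ?thesis
    unfolding c using bd iv tn
    by - ((rule reaches_step, simp, simp, simp add: work_cells_def, simp)+, rule reaches_here,
        use rr in \<open>simp add: final_def halted_def\<close>)
qed

lemma init_reaches: "runs (init_config k w) 5 (prefix_inv 1)"
proof -
  obtain m0 where c: "init_config k w = (0, m0)" by (simp add: init_config_def)
  have f: "m0 0 = int n" "m0 1 = int k" "\<forall>i<n. m0 (int i + 2) = int (w ! i)"
    using c by (auto simp: init_config_def)
  show ?thesis
    unfolding c
    by ((rule reaches_step, simp, simp, simp add: work_cells_def, simp)+, rule reaches_here,
        use f in \<open>simp add: prefix_inv_def input_mem_def table_mem_def\<close>)
qed

lemma rank_prog_reaches_final:
  "runs (init_config k w) (5 + (n * (n * (17 * n + 30) + 22) + 6)) final"
proof (rule reaches_seq[OF init_reaches])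
  fix c assume "prefix_inv 1 c"
  then have "runs c ((n + 1 - 1) * (n * (17 * n + 30) + 22) + 6) final"
    by (intro reaches_for_loop[of "n + 1" prefix_inv] prefix_iter) (auto intro: prefix_exit)
  then show "runs c (n * (n * (17 * n + 30) + 22) + 6) final"
    by simp
qed

lemma rank_prog_steps: "5 + (n * (n * (17 * n + 30) + 22) + 6) \<le> 80 * n ^ 3"
proof -
  have "n \<le> n ^ 3" "n ^ 2 \<le> n ^ 3" "1 \<le> n ^ 3"
    using w_nonempty by (simp_all add: power_increasing[of 1 3 n, simplified]
        power_increasing[of 2 3 n] Suc_le_eq)
  moreover have "5 + (n * (n * (17 * n + 30) + 22) + 6) = 17 * n ^ 3 + 30 * n ^ 2 + 22 * n + 11"
    by (simp add: power2_eq_square power3_eq_cube algebra_simps)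
  ultimately show ?thesis by linarith
qed

lemma rank_prog_correct:
  "\<exists>t \<le> 80 * n ^ 3. halted rank_prog (steps rank_prog t (init_config k w)) \<and>
     snd (steps rank_prog t (init_config k w)) 0 = int (rankU k w) \<and>
     card (cells_used rank_prog t (init_config k w)) \<le> 3 * n + 202"
proof -
  obtain t where t: "t \<le> 5 + (n * (n * (17 * n + 30) + 22) + 6)"
    "final (steps rank_prog t (init_config k w))"
    "cells_used rank_prog t (init_config k w) \<subseteq> work_cells n"
    using rank_prog_reaches_final unfolding reaches_def by blast
  have "card (cells_used rank_prog t (init_config k w)) \<le> card (work_cells n)"
    using t(3) by (rule card_mono[rotated]) (simp add: work_cells_def)
  then show ?thesis
    using t(1,2) rank_prog_steps by (intro exI[of _ t]) (auto simp: final_def work_cells_def)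
qed

end

theorem theorem10:
  shows "\<exists>(P :: instr list) (C :: nat). \<forall>n k w.
           n \<ge> 1 \<longrightarrow> k \<ge> 2 \<longrightarrow> length w = n \<longrightarrow> word_over k w \<longrightarrow>
           (\<exists>t. t \<le> C * k * n ^ 3 \<and>
                halted P (steps P t (init_config k w)) \<and>
                snd (steps P t (init_config k w)) 0 = int (rankU k w) \<and>
                card (cells_used P t (init_config k w)) \<le> C * n)"
proof (rule exI[of _ rank_prog], rule exI[of _ 205], intro allI impI)
  fix n k :: nat and w :: "nat list"
  assume n: "n \<ge> 1" and k: "k \<ge> 2" and w: "length w = n" "word_over k w"
  then interpret rank_input k w
    by unfold_locales auto
  obtain t where "t \<le> 80 * n ^ 3" "halted rank_prog (steps rank_prog t (init_config k w))"
    "snd (steps rank_prog t (init_config k w)) 0 = int (rankU k w)"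
    "card (cells_used rank_prog t (init_config k w)) \<le> 3 * n + 202"
    using rank_prog_correct w(1) by blast
  moreover have "80 * n ^ 3 \<le> 205 * k * n ^ 3" and "3 * n + 202 \<le> 205 * n"
    using n k by simp_all
  ultimately show "\<exists>t. t \<le> 205 * k * n ^ 3 \<and>
      halted rank_prog (steps rank_prog t (init_config k w)) \<and>
      snd (steps rank_prog t (init_config k w)) 0 = int (rankU k w) \<and>
      card (cells_used rank_prog t (init_config k w)) \<le> 205 * n"
    by (meson order_trans)
qed

end
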